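(* There exist an objective $f:\mathbb{R}^d\to\mathbb{R}$ satisfying Assumptions 1 and 2, a stochastic gradient oracle $(F,\mathcal D)$ satisfying Assumption 3, an initial point $x^{(0)}$ and a constant $\epsilon_0>0$ such that for GaSare with an arbitrary subspace optimizer, any sparsity levels $k_\ell<m_\ell n_\ell$, any period $\tau\ge1$, any choice of the maps $\rho_\ell^{(t)}$ (with arbitrary hyperparameters), and every realization of the samples, $\|\nabla f(x^{(t)})\|_2^2\ge\epsilon_0$ for all $t\ge0$.
   Context: Parameters $x=(\mathrm{vec}(X_1)^\top,\dots,\mathrm{vec}(X_{N_L})^\top)^\top\in\mathbb{R}^d$, $X_\ell\in\mathbb{R}^{m_\ell\times n_\ell}$; $f(x)=\mathbb{E}_{\xi\sim\mathcal D}F(x;\xi)$; $\nabla_\ell$ is the gradient w.r.t. $X_\ell$. Assumption 1: $\inf f>-\infty$. Assumption 2: $\nabla f$ is $L$-Lipschitz in $\|\cdot\|_2$. Assumption 3: $\mathbb{E}_\xi[\nabla_\ell F(x;\xi)]=\nabla_\ell f(x)$ and $\mathbb{E}_\xi\|\nabla_\ell F(x;\xi)-\nabla_\ell f(x)\|_F^2\le\sigma_\ell^2$ for all $x,\ell$. GaSare with an arbitrary subspace optimizer: at each $t$ draw $\xi^{(t)}\sim\mathcal D$ independently and set $G_\ell^{(t)}=\nabla_\ell F(x^{(t)};\xi^{(t)})$; if $t\equiv0\pmod\tau$ let $S_\ell^{(t)}$ be a Top-$k_\ell$ mask of $G_\ell^{(t)}$ (the $0/1$ matrix with exactly $k_\ell$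 ones at positions of $k_\ell$ entries of largest absolute value, ties arbitrary), otherwise $S_\ell^{(t)}=S_\ell^{(t-1)}$; update $X_\ell^{(t+1)}=X_\ell^{(t)}+S_\ell^{(t)}\odot\rho_\ell^{(t)}(S_\ell^{(t)}\odot G_\ell^{(t)})$, where $\rho_\ell^{(t)}$ is an arbitrary (possibly stateful) map from $m_\ell\times n_\ell$ matrices to $m_\ell\times n_\ell$ matrices and $\odot$ is the entrywise product. *)

theory Defs
  imports "HOL-Analysis.Analysis" "HOL-Probability.Probability"
begin

text \<open>Parameters are vectors x :: real^'p over a finite index type 'p of all entries
  of all layer matrices; lay p is the layer of entry p, so the block of layer l is
  vec(X_l) and the Frobenius norm of a layer block is the Euclidean norm of its
  restriction.\<close>

definition layer :: "('p \<Rightarrow> 'l) \<Rightarrow> 'l \<Rightarrow> 'p set" where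
  "layer lay l = {p. lay p = l}"

definition blk :: "('p \<Rightarrow> 'l) \<Rightarrow> 'l \<Rightarrow> real^'p \<Rightarrow> real^'p" where
  "blk lay l v = (\<chi> p. if lay p = l then v $ p else 0)"

text \<open>Entrywise product with the 0/1 mask whose support is S.\<close>
definition mask_mult :: "'p set \<Rightarrow> real^'p \<Rightarrow> real^'p" where
  "mask_mult S v = (\<chi> p. if p \<in> S then v $ p else 0)"

definition is_topk :: "('p \<Rightarrow> 'l) \<Rightarrow> 'l \<Rightarrow> nat \<Rightarrow> real^'p \<Rightarrow> 'p set \<Rightarrow> bool" where
  "is_topk lay l k G S \<longleftrightarrow> S \<subseteq> layer lay l \<and> card S = k \<and>
     (\<forall>p\<in>S. \<forall>q\<in>layer lay l - S. \<bar>G $ q\<bar> \<le> \<bar>G $ p\<bar>)"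

text \<open>A trajectory (xs, S) of GaSare with an arbitrary subspace optimizer.
  gF x xi is the stochastic gradient at x for sample xi; xis t is the sample drawn at step t.
  rho t l is the (possibly stateful) map used at step t on layer l: its state is modelled by
  letting it see the whole history of its inputs S_l^(s) (.) G_l^(s), s \<le> t.\<close>
definition gasare_run ::
  "('p \<Rightarrow> 'l) \<Rightarrow> (real^'p \<Rightarrow> 'x \<Rightarrow> real^'p) \<Rightarrow> real^'p \<Rightarrow> ('l \<Rightarrow> nat) \<Rightarrow> nat \<Rightarrow>
   (nat \<Rightarrow> 'l \<Rightarrow> (nat \<Rightarrow> real^'p) \<Rightarrow> real^'p) \<Rightarrow> (nat \<Rightarrow> 'x) \<Rightarrow>
   (nat \<Rightarrow> real^'p) \<Rightarrow> (nat \<Rightarrow> 'l \<Rightarrow> 'p set) \<Rightarrow> bool" where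
  "gasare_run lay gF x0 k \<tau> rho xis xs S \<longleftrightarrow>
     xs 0 = x0 \<and>
     (\<forall>t l. (t mod \<tau> = 0 \<longrightarrow> is_topk lay l (k l) (gF (xs t) (xis t)) (S t l)) \<and>
            (t mod \<tau> \<noteq> 0 \<longrightarrow> S t l = S (t - 1) l)) \<and>
     (\<forall>t. xs (Suc t) = xs t +
        (\<chi> p. if p \<in> S t (lay p)
               then rho t (lay p)
                      (\<lambda>s. if s \<le> t then mask_mult (S s (lay p)) (gF (xs s) (xis s)) else 0) $ p
               else 0))"

end

theory Submission
  imports Defs
begin

text \<open>Take f(x) = x_q^2 for one fixed entry q and let each sample add \<plusminus>3 times the sum of all
  other entries. The sampled gradient then has entry 2 x_q at q and entries of absolute value 3
  everywhere else, so while x_q = 1 the entry q is the strictly smallest one of its layer and is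
  never chosen by a Top-k mask with k below the layer size. Masked-out entries are never
  updated, hence x_q stays 1 forever and the true gradient 2 x_q e_q keeps squared norm 4.\<close>

lemma topk_excludes_strict_minimum:
  assumes topk: "is_topk lay l k G S" and k: "k < card (layer lay l)"
    and fin: "finite (layer lay l)" and q: "lay q = l"
    and smallest: "\<And>p. lay p = l \<Longrightarrow> p \<noteq> q \<Longrightarrow> \<bar>G $ q\<bar> < \<bar>G $ p\<bar>"
  shows "q \<notin> S"
proof
  assume "q \<in> S"
  have S: "S \<subseteq> layer lay l" "card S = k" using topk unfolding is_topk_def by auto
  have "\<not> layer lay l \<subseteq> S" using S k fin card_mono by fastforce
  then obtain p where p: "p \<in> layer lay l - S" by blast
  then have "\<bar>G $ p\<bar> \<le> \<bar>G $ q\<bar>" using topk \<open>q \<in> S\<close> unfolding is_topk_def by blast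
  moreover have "lay p = l" "p \<noteq> q" using p \<open>q \<in> S\<close> by (auto simp: layer_def)
  ultimately show False using smallest by force
qed

text \<open>No assumption on \<tau> is needed: for \<tau> = 0 the mask is drawn at t = 0 and kept forever.\<close>

lemma gasare_run_coordinate_frozen:
  assumes run: "gasare_run lay gF x0 k \<tau> rho xis xs S"
    and excluded: "\<And>t. t mod \<tau> = 0 \<Longrightarrow> xs t $ q = x0 $ q \<Longrightarrow> q \<notin> S t (lay q)"
  shows "xs t $ q = x0 $ q \<and> q \<notin> S t (lay q)"
proof (induction t)
  case 0
  then show ?case using run excluded[of 0] by (simp add: gasare_run_def)
next
  case (Suc t)
  then have frozen: "xs (Suc t) $ q = x0 $ q" using run by (simp add: gasare_run_def)
  moreover have "q \<notin> S (Suc t) (lay q)"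
  proof (cases "Suc t mod \<tau> = 0")
    case True
    then show ?thesis by (rule excluded[OF _ frozen])
  next
    case False
    then have "S (Suc t) (lay q) = S t (lay q)" using run by (simp add: gasare_run_def)
    then show ?thesis using Suc by simp
  qed
  ultimately show ?case ..
qed

definition trap_obj :: "'p \<Rightarrow> real^'p \<Rightarrow> real" where
  "trap_obj q x = (x $ q)\<^sup>2"

definition trap_grad :: "'p \<Rightarrow> real^'p \<Rightarrow> real^'p" where
  "trap_grad q x = (2 * x $ q) *\<^sub>R axis q 1"

definition trap_noise :: "nat \<Rightarrow> real" where
  "trap_noise \<xi> = (if \<xi> = 0 then 3 else -3)"

definition off_axis :: "'p \<Rightarrow> real^'p" where
  "off_axis q = (\<chi> p. if p = q then 0 else 1)"

definition trap_sample_obj :: "'p \<Rightarrow> real^'p \<Rightarrow> nat \<Rightarrow> real" where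
  "trap_sample_obj q x \<xi> = trap_obj q x + trap_noise \<xi> * (off_axis q \<bullet> x)"

definition trap_sample_grad :: "'p \<Rightarrow> real^'p \<Rightarrow> nat \<Rightarrow> real^'p" where
  "trap_sample_grad q x \<xi> = trap_grad q x + trap_noise \<xi> *\<^sub>R off_axis q"

lemma has_derivative_coord_square_plus_linear:
  fixes w x :: "real^'p::finite"
  shows "((\<lambda>y. (y $ q)\<^sup>2 + c * (w \<bullet> y))
           has_derivative (\<lambda>h. ((2 * x $ q) *\<^sub>R axis q 1 + c *\<^sub>R w) \<bullet> h)) (at x)"
proof -
  have "((\<lambda>y. (axis q 1 \<bullet> y) * (axis q 1 \<bullet> y) + c * (w \<bullet> y)) has_derivative
         (\<lambda>h. (axis q 1 \<bullet> x) * (axis q 1 \<bullet> h) + (axis q 1 \<bullet> h) * (axis q 1 \<bullet> x) + c * (w \<bullet> h)))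
         (at x)"
    by (intro derivative_intros)
  then show ?thesis
    by (simp add: inner_axis' power2_eq_square inner_add_left algebra_simps)
qed

lemma trap_obj_has_derivative: "(trap_obj q has_derivative (\<lambda>h. trap_grad q x \<bullet> h)) (at x)"
  using has_derivative_coord_square_plus_linear[of q 0 0 x]
  by (simp add: trap_obj_def[abs_def] trap_grad_def)

lemma trap_sample_obj_has_derivative:
  "((\<lambda>y. trap_sample_obj q y \<xi>) has_derivative (\<lambda>h. trap_sample_grad q x \<xi> \<bullet> h)) (at x)"
  using has_derivative_coord_square_plus_linear[of q "trap_noise \<xi>" "off_axis q" x]
  by (simp add: trap_sample_obj_def trap_sample_grad_def trap_obj_def trap_grad_def)

lemma trap_grad_lipschitz: "norm (trap_grad q x - trap_grad q y) \<le> 2 * norm (x - y)"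
proof -
  have "trap_grad q x - trap_grad q y = (2 * (x - y) $ q) *\<^sub>R axis q 1"
    by (simp add: trap_grad_def algebra_simps)
  then have "norm (trap_grad q x - trap_grad q y) = 2 * \<bar>(x - y) $ q\<bar>"
    by (simp only: norm_scaleR norm_axis_1 abs_mult)
  also have "\<dots> \<le> 2 * norm (x - y)" using component_le_norm_cart[of "x - y" q] by simp
  finally show ?thesis .
qed

lemma trap_sample_grad_nth:
  "trap_sample_grad q x \<xi> $ p = (if p = q then 2 * x $ q else trap_noise \<xi>)"
  by (simp add: trap_sample_grad_def trap_grad_def off_axis_def axis_def)

lemma integrable_pmf_of_set_01:
  fixes g :: "nat \<Rightarrow> 'z::{banach,second_countable_topology}"
  shows "integrable (measure_pmf (pmf_of_set {0, 1})) g"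
  by (rule integrable_measure_pmf_finite) (simp add: set_pmf_of_set)

lemma expectation_pmf_of_set_01:
  fixes g :: "nat \<Rightarrow> 'z::{banach,second_countable_topology}"
  shows "measure_pmf.expectation (pmf_of_set {0, 1}) g = (g 0 + g 1) /\<^sub>R 2"
proof -
  have "measure_pmf.expectation (pmf_of_set {0, 1}) g
          = (\<Sum>i\<in>{0, 1}. pmf (pmf_of_set {0, 1}) i *\<^sub>R g i)"
    by (rule integral_measure_pmf) (auto simp: set_pmf_of_set)
  then show ?thesis by (simp add: scaleR_add_right)
qed

lemma trap_sample_obj_expectation:
  "measure_pmf.expectation (pmf_of_set {0, 1}) (trap_sample_obj q x) = trap_obj q x"
  unfolding expectation_pmf_of_set_01 by (simp add: trap_sample_obj_def trap_noise_def)

lemma trap_oracle_block_variance_bounded: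
  "\<exists>\<sigma> :: 'l \<Rightarrow> real. \<forall>x l.
     integrable (pmf_of_set {0, 1}) (\<lambda>\<xi>. blk lay l (trap_sample_grad q x \<xi>)) \<and>
     measure_pmf.expectation (pmf_of_set {0, 1}) (\<lambda>\<xi>. blk lay l (trap_sample_grad q x \<xi>))
       = blk lay l (trap_grad q x) \<and>
     integrable (pmf_of_set {0, 1})
       (\<lambda>\<xi>. (norm (blk lay l (trap_sample_grad q x \<xi> - trap_grad q x)))\<^sup>2) \<and>
     measure_pmf.expectation (pmf_of_set {0, 1})
       (\<lambda>\<xi>. (norm (blk lay l (trap_sample_grad q x \<xi> - trap_grad q x)))\<^sup>2) \<le> (\<sigma> l)\<^sup>2"
proof (intro exI[of _ "\<lambda>l. 3 * norm (blk lay l (off_axis q))"] allI conjI)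
  fix x l
  show "measure_pmf.expectation (pmf_of_set {0, 1}) (\<lambda>\<xi>. blk lay l (trap_sample_grad q x \<xi>))
          = blk lay l (trap_grad q x)"
    unfolding expectation_pmf_of_set_01
    by (simp add: trap_sample_grad_def trap_noise_def blk_def vec_eq_iff)
  have "blk lay l (trap_sample_grad q x \<xi> - trap_grad q x) = trap_noise \<xi> *\<^sub>R blk lay l (off_axis q)"
    for \<xi> by (simp add: trap_sample_grad_def blk_def vec_eq_iff)
  then show "measure_pmf.expectation (pmf_of_set {0, 1})
      (\<lambda>\<xi>. (norm (blk lay l (trap_sample_grad q x \<xi> - trap_grad q x)))\<^sup>2)
      \<le> (3 * norm (blk lay l (off_axis q)))\<^sup>2"
    unfolding expectation_pmf_of_set_01 by (simp add: trap_noise_def)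
qed (rule integrable_pmf_of_set_01)+

lemma gasare_run_trap_grad_stuck:
  fixes lay :: "'p::finite \<Rightarrow> 'l"
  assumes k: "\<forall>l. k l < card (layer lay l)"
    and run: "gasare_run lay (trap_sample_grad q) (axis q 1) k \<tau> rho xis xs S"
  shows "trap_grad q (xs t) = 2 *\<^sub>R axis q 1"
proof -
  have "q \<notin> S t (lay q)" if "t mod \<tau> = 0" "xs t $ q = axis q 1 $ q" for t
  proof (rule topk_excludes_strict_minimum)
    show "is_topk lay (lay q) (k (lay q)) (trap_sample_grad q (xs t) (xis t)) (S t (lay q))"
      using run that(1) by (simp add: gasare_run_def)
    show "\<bar>trap_sample_grad q (xs t) (xis t) $ q\<bar> < \<bar>trap_sample_grad q (xs t) (xis t) $ p\<bar>"
      if "p \<noteq> q" for p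
      using that \<open>xs t $ q = axis q 1 $ q\<close> by (simp add: trap_sample_grad_nth trap_noise_def)
  qed (use k in auto)
  then have "xs t $ q = 1" using gasare_run_coordinate_frozen[OF run] by force
  then show ?thesis by (simp add: trap_grad_def)
qed

theorem theoremC3:
  fixes lay :: "'p::finite \<Rightarrow> 'l"
  assumes "surj lay"
  shows "\<exists>(f :: real^'p \<Rightarrow> real) (gf :: real^'p \<Rightarrow> real^'p)
            (F :: real^'p \<Rightarrow> nat \<Rightarrow> real) (gF :: real^'p \<Rightarrow> nat \<Rightarrow> real^'p)
            (D :: nat pmf) (x0 :: real^'p) (\<epsilon>0 :: real).
     \<comment> \<open>gf is the gradient of f and gF x xi the gradient of F(.;xi) at x\<close>
     (\<forall>x. (f has_derivative (\<lambda>h. gf x \<bullet> h)) (at x)) \<and>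
     (\<forall>x xi. ((\<lambda>y. F y xi) has_derivative (\<lambda>h. gF x xi \<bullet> h)) (at x)) \<and>
     \<comment> \<open>f(x) = E F(x;xi)\<close>
     (\<forall>x. integrable (measure_pmf D) (F x) \<and> f x = measure_pmf.expectation D (F x)) \<and>
     \<comment> \<open>Assumption 1\<close>
     bdd_below (range f) \<and>
     \<comment> \<open>Assumption 2\<close>
     (\<exists>L. \<forall>x y. norm (gf x - gf y) \<le> L * norm (x - y)) \<and>
     \<comment> \<open>Assumption 3\<close>
     (\<exists>\<sigma> :: 'l \<Rightarrow> real. \<forall>x l.
        integrable (measure_pmf D) (\<lambda>xi. blk lay l (gF x xi)) \<and>
        measure_pmf.expectation D (\<lambda>xi. blk lay l (gF x xi)) = blk lay l (gf x) \<and>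
        integrable (measure_pmf D) (\<lambda>xi. (norm (blk lay l (gF x xi - gf x)))\<^sup>2) \<and>
        measure_pmf.expectation D (\<lambda>xi. (norm (blk lay l (gF x xi - gf x)))\<^sup>2) \<le> (\<sigma> l)\<^sup>2) \<and>
     \<epsilon>0 > 0 \<and>
     \<comment> \<open>GaSare with any sparsity, period, maps, tie-breaking and sample realization\<close>
     (\<forall>(k :: 'l \<Rightarrow> nat) (\<tau> :: nat) rho (xis :: nat \<Rightarrow> nat) xs S.
        (\<forall>l. k l < card (layer lay l)) \<longrightarrow> \<tau> \<ge> 1 \<longrightarrow>
        (\<forall>t. xis t \<in> set_pmf D) \<longrightarrow>
        gasare_run lay gF x0 k \<tau> rho xis xs S \<longrightarrow>
        (\<forall>t. (norm (gf (xs t)))\<^sup>2 \<ge> \<epsilon>0))"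
proof -
  fix q :: 'p
  have "bdd_below (range (trap_obj q))" by (auto simp: trap_obj_def intro: bdd_belowI[of _ 0])
  moreover have "\<exists>L. \<forall>x y. norm (trap_grad q x - trap_grad q y) \<le> L * norm (x - y)"
    using trap_grad_lipschitz by blast
  moreover have "(norm (trap_grad q (xs t)))\<^sup>2 \<ge> 4"
    if "\<forall>l. k l < card (layer lay l)" "gasare_run lay (trap_sample_grad q) (axis q 1) k \<tau> rho xis xs S"
    for k \<tau> rho xis xs S t
    using gasare_run_trap_grad_stuck[OF that] by (simp add: norm_axis_1)
  ultimately show ?thesis
    using trap_obj_has_derivative trap_sample_obj_has_derivative
      trap_sample_obj_expectation[symmetric] integrable_pmf_of_set_01
      trap_oracle_block_variance_bounded[of lay q]
    by (intro exI[of _ "trap_obj q"] exI[of _ "trap_grad q"] exI[of _ "trap_sample_obj q"]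
        exI[of _ "trap_sample_grad q"] exI[of _ "pmf_of_set {0, 1}"] exI[of _ "axis q 1"]
        exI[of _ 4]) auto
qed

end
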